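(* Let $R$ be a unital ring and let $(P,Q,\psi)$ be a unital $R$-system satisfying Condition (FS'). Let $(S,T,\sigma,B)$ be an injective, surjective and graded covariant representation of $(P,Q,\psi)$ such that (a) $(S,T,\sigma,B)$ is faithful, and (b) $\psi$ is surjective. Then $B$ is strongly $\mathbb{Z}$-graded.
   Context: A $\mathbb{Z}$-graded ring $B=\bigoplus_{i\in\mathbb{Z}}B_i$ is strongly graded if $B_mB_n=B_{m+n}$ for all $m,n$ (where $XY$ is the additive subgroup generated by products). An $R$-system is a triple $(P,Q,\psi)$ with $P,Q$ $R$-bimodules and $\psi:P\otimes_RQ\to R$ an $R$-bimodule homomorphism; it is unital if $R$ is unital and $1_R$ acts as identity on both sides of $P$ and $Q$. A covariant representation of $(P,Q,\psi)$ is a tuple $(S,T,\sigma,B)$ with $B$ a ring, $S:P\to B$, $T:Q\to B$ additive maps, $\sigma:R\to B$ a ring homomorphism, such that $S(pr)=S(p)\sigma(r)$, $S(rp)=\sigma(r)S(p)$, $T(qr)=T(q)\sigma(r)$, $T(rq)=\sigma(r)T(q)$ and $\sigma(\psi(p\otimes q))=S(p)T(q)$. It is injective if $\sigma$ is injective, surjective if $B$ is generated as a ring by $\sigma(R)\cup S(P)\cup T(Q)$, and graded if it is surjective and $B$ carries a $\mathbb{Z}$-grading with $\sigma(R)\subseteq B_0$, $T(Q)\subseteq B_1$, $S(P)\subseteq B_{-1}$. For $q\in Q,p\in P$ let $\theta_{q,p}:Q\to Q$, $x\mapsto q\psi(p\otimes x)$, and $\theta_{p,q}:P\to P$, $y\mapsto\psi(y\otimes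 q)p$; $\mathcal{F}_P(Q)$ (resp. $\mathcal{F}_Q(P)$) is the additive group generated by all $\theta_{q,p}$ (resp. $\theta_{p,q}$). Condition (FS'): there exist $\Theta\in\mathcal{F}_P(Q)$, $\Phi\in\mathcal{F}_Q(P)$ with $\Theta(q)=q$, $\Phi(p)=p$ for all $q\in Q,p\in P$. Let $\Delta:R\to\mathrm{End}(Q_R)$, $\Delta(r)(q)=rq$. Under (FS') (which implies the local version (FS)) there is a unique ring homomorphism $\pi_{T,S}:\mathcal{F}_P(Q)\to B$ with $\pi_{T,S}(\theta_{q,p})=T(q)S(p)$; in the unital case $\Delta(1_R)=\mathrm{id}_Q\in\mathcal{F}_P(Q)$, and $(S,T,\sigma,B)$ is called faithful if $\pi_{T,S}(\Delta(1_R))=\sigma(1_R)$. *)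

theory Defs
  imports Main "HOL-Library.Function_Algebras"
begin

inductive_set addgen :: "'a::ab_group_add set \<Rightarrow> 'a set" for X where
  addgen_zero: "0 \<in> addgen X"
| addgen_base: "x \<in> X \<Longrightarrow> x \<in> addgen X"
| addgen_add: "x \<in> addgen X \<Longrightarrow> y \<in> addgen X \<Longrightarrow> x + y \<in> addgen X"
| addgen_neg: "x \<in> addgen X \<Longrightarrow> - x \<in> addgen X"

inductive_set ringgen :: "'a::ring set \<Rightarrow> 'a set" for X where
  ringgen_zero: "0 \<in> ringgen X"
| ringgen_base: "x \<in> X \<Longrightarrow> x \<in> ringgen X"
| ringgen_add: "x \<in> ringgen X \<Longrightarrow> y \<in> ringgen X \<Longrightarrow> x + y \<in> ringgen X"
| ringgen_neg: "x \<in> ringgen X \<Longrightarrow> - x \<in> ringgen X"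
| ringgen_mult: "x \<in> ringgen X \<Longrightarrow> y \<in> ringgen X \<Longrightarrow> x * y \<in> ringgen X"

definition setprod :: "'a::ring set \<Rightarrow> 'a set \<Rightarrow> 'a set" where
  "setprod X Y = addgen {x * y | x y. x \<in> X \<and> y \<in> Y}"

definition additive_subgroup :: "'a::ab_group_add set \<Rightarrow> bool" where
  "additive_subgroup H \<longleftrightarrow> 0 \<in> H \<and> (\<forall>x\<in>H. \<forall>y\<in>H. x + y \<in> H) \<and> (\<forall>x\<in>H. - x \<in> H)"

definition Z_graded :: "(int \<Rightarrow> 'b::ring set) \<Rightarrow> bool" where
  "Z_graded G \<longleftrightarrow>
     (\<forall>i. additive_subgroup (G i)) \<and>
     (\<forall>x. \<exists>f. finite {i. f i \<noteq> 0} \<and> (\<forall>i. f i \<in> G i) \<and> x = (\<Sum>i\<in>{i. f i \<noteq> 0}. f i)) \<and>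
     (\<forall>f. finite {i. f i \<noteq> 0} \<and> (\<forall>i. f i \<in> G i) \<and> (\<Sum>i\<in>{i. f i \<noteq> 0}. f i) = 0
           \<longrightarrow> (\<forall>i. f i = 0)) \<and>
     (\<forall>m n. \<forall>x\<in>G m. \<forall>y\<in>G n. x * y \<in> G (m + n))"

definition strongly_graded :: "(int \<Rightarrow> 'b::ring set) \<Rightarrow> bool" where
  "strongly_graded G \<longleftrightarrow> (\<forall>m n. setprod (G m) (G n) = G (m + n))"

definition bimodule :: "('r::ring_1 \<Rightarrow> 'm::ab_group_add \<Rightarrow> 'm) \<Rightarrow> ('m \<Rightarrow> 'r \<Rightarrow> 'm) \<Rightarrow> bool" where
  "bimodule l r \<longleftrightarrow>
     (\<forall>a x y. l a (x + y) = l a x + l a y) \<and>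
     (\<forall>a b x. l (a + b) x = l a x + l b x) \<and>
     (\<forall>a b x. l (a * b) x = l a (l b x)) \<and>
     (\<forall>a x y. r (x + y) a = r x a + r y a) \<and>
     (\<forall>a b x. r x (a + b) = r x a + r x b) \<and>
     (\<forall>a b x. r x (a * b) = r (r x a) b) \<and>
     (\<forall>a b x. r (l a x) b = l a (r x b))"

definition unital_bimodule :: "('r::ring_1 \<Rightarrow> 'm::ab_group_add \<Rightarrow> 'm) \<Rightarrow> ('m \<Rightarrow> 'r \<Rightarrow> 'm) \<Rightarrow> bool" where
  "unital_bimodule l r \<longleftrightarrow> bimodule l r \<and> (\<forall>x. l 1 x = x) \<and> (\<forall>x. r x 1 = x)"

text \<open>An R-bimodule homomorphism \<open>P \<otimes>\<^sub>R Q \<rightarrow> R\<close> is given, via the universal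
  property of the tensor product, by an R-balanced biadditive map
  \<open>\<psi> :: P \<Rightarrow> Q \<Rightarrow> R\<close> with \<open>\<psi>(rp,q) = r\<psi>(p,q)\<close> and \<open>\<psi>(p,qr) = \<psi>(p,q)r\<close>.\<close>
definition R_system ::
  "('r::ring_1 \<Rightarrow> 'p::ab_group_add \<Rightarrow> 'p) \<Rightarrow> ('p \<Rightarrow> 'r \<Rightarrow> 'p) \<Rightarrow>
   ('r \<Rightarrow> 'q::ab_group_add \<Rightarrow> 'q) \<Rightarrow> ('q \<Rightarrow> 'r \<Rightarrow> 'q) \<Rightarrow> ('p \<Rightarrow> 'q \<Rightarrow> 'r) \<Rightarrow> bool" where
  "R_system lP rP lQ rQ \<psi> \<longleftrightarrow>
     bimodule lP rP \<and> bimodule lQ rQ \<and>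
     (\<forall>p p' q. \<psi> (p + p') q = \<psi> p q + \<psi> p' q) \<and>
     (\<forall>p q q'. \<psi> p (q + q') = \<psi> p q + \<psi> p q') \<and>
     (\<forall>p a q. \<psi> (rP p a) q = \<psi> p (lQ a q)) \<and>
     (\<forall>p a q. \<psi> (lP a p) q = a * \<psi> p q) \<and>
     (\<forall>p a q. \<psi> p (rQ q a) = \<psi> p q * a)"

definition unital_R_system ::
  "('r::ring_1 \<Rightarrow> 'p::ab_group_add \<Rightarrow> 'p) \<Rightarrow> ('p \<Rightarrow> 'r \<Rightarrow> 'p) \<Rightarrow>
   ('r \<Rightarrow> 'q::ab_group_add \<Rightarrow> 'q) \<Rightarrow> ('q \<Rightarrow> 'r \<Rightarrow> 'q) \<Rightarrow> ('p \<Rightarrow> 'q \<Rightarrow> 'r) \<Rightarrow> bool" where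
  "unital_R_system lP rP lQ rQ \<psi> \<longleftrightarrow>
     R_system lP rP lQ rQ \<psi> \<and> unital_bimodule lP rP \<and> unital_bimodule lQ rQ"

text \<open>Surjectivity of \<open>\<psi> : P \<otimes>\<^sub>R Q \<rightarrow> R\<close>: its image is the additive subgroup
  generated by the values on simple tensors.\<close>
definition psi_surjective :: "('p \<Rightarrow> 'q \<Rightarrow> 'r::ab_group_add) \<Rightarrow> bool" where
  "psi_surjective \<psi> \<longleftrightarrow> addgen {\<psi> p q | p q. True} = UNIV"

definition thetaQ :: "('q \<Rightarrow> 'r \<Rightarrow> 'q) \<Rightarrow> ('p \<Rightarrow> 'q \<Rightarrow> 'r) \<Rightarrow> 'q \<Rightarrow> 'p \<Rightarrow> 'q \<Rightarrow> 'q" where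
  "thetaQ rQ \<psi> q p = (\<lambda>x. rQ q (\<psi> p x))"

definition thetaP :: "('r \<Rightarrow> 'p \<Rightarrow> 'p) \<Rightarrow> ('p \<Rightarrow> 'q \<Rightarrow> 'r) \<Rightarrow> 'p \<Rightarrow> 'q \<Rightarrow> 'p \<Rightarrow> 'p" where
  "thetaP lP \<psi> p q = (\<lambda>y. lP (\<psi> y q) p)"

definition F_PQ :: "('q::ab_group_add \<Rightarrow> 'r \<Rightarrow> 'q) \<Rightarrow> ('p \<Rightarrow> 'q \<Rightarrow> 'r) \<Rightarrow> ('q \<Rightarrow> 'q) set" where
  "F_PQ rQ \<psi> = addgen {thetaQ rQ \<psi> q p | q p. True}"

definition F_QP :: "('r \<Rightarrow> 'p::ab_group_add \<Rightarrow> 'p) \<Rightarrow> ('p \<Rightarrow> 'q \<Rightarrow> 'r) \<Rightarrow> ('p \<Rightarrow> 'p) set" where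
  "F_QP lP \<psi> = addgen {thetaP lP \<psi> p q | p q. True}"

definition condition_FS' ::
  "('r \<Rightarrow> 'p::ab_group_add \<Rightarrow> 'p) \<Rightarrow> ('q::ab_group_add \<Rightarrow> 'r \<Rightarrow> 'q) \<Rightarrow> ('p \<Rightarrow> 'q \<Rightarrow> 'r) \<Rightarrow> bool" where
  "condition_FS' lP rQ \<psi> \<longleftrightarrow>
     (\<exists>\<Theta>\<in>F_PQ rQ \<psi>. \<forall>q. \<Theta> q = q) \<and> (\<exists>\<Phi>\<in>F_QP lP \<psi>. \<forall>p. \<Phi> p = p)"

definition covariant_rep ::
  "('r::ring_1 \<Rightarrow> 'p::ab_group_add \<Rightarrow> 'p) \<Rightarrow> ('p \<Rightarrow> 'r \<Rightarrow> 'p) \<Rightarrow>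
   ('r \<Rightarrow> 'q::ab_group_add \<Rightarrow> 'q) \<Rightarrow> ('q \<Rightarrow> 'r \<Rightarrow> 'q) \<Rightarrow> ('p \<Rightarrow> 'q \<Rightarrow> 'r) \<Rightarrow>
   ('p \<Rightarrow> 'b::ring) \<Rightarrow> ('q \<Rightarrow> 'b) \<Rightarrow> ('r \<Rightarrow> 'b) \<Rightarrow> bool" where
  "covariant_rep lP rP lQ rQ \<psi> S T \<sigma> \<longleftrightarrow>
     (\<forall>x y. S (x + y) = S x + S y) \<and>
     (\<forall>x y. T (x + y) = T x + T y) \<and>
     (\<forall>a b. \<sigma> (a + b) = \<sigma> a + \<sigma> b) \<and>
     (\<forall>a b. \<sigma> (a * b) = \<sigma> a * \<sigma> b) \<and>
     (\<forall>p a. S (rP p a) = S p * \<sigma> a) \<and>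
     (\<forall>p a. S (lP a p) = \<sigma> a * S p) \<and>
     (\<forall>q a. T (rQ q a) = T q * \<sigma> a) \<and>
     (\<forall>q a. T (lQ a q) = \<sigma> a * T q) \<and>
     (\<forall>p q. \<sigma> (\<psi> p q) = S p * T q)"

definition rep_injective :: "('r \<Rightarrow> 'b) \<Rightarrow> bool" where
  "rep_injective \<sigma> \<longleftrightarrow> inj \<sigma>"

definition rep_surjective :: "('p \<Rightarrow> 'b::ring) \<Rightarrow> ('q \<Rightarrow> 'b) \<Rightarrow> ('r \<Rightarrow> 'b) \<Rightarrow> bool" where
  "rep_surjective S T \<sigma> \<longleftrightarrow> ringgen (range \<sigma> \<union> range S \<union> range T) = UNIV"

definition rep_graded ::
  "('p \<Rightarrow> 'b::ring) \<Rightarrow> ('q \<Rightarrow> 'b) \<Rightarrow> ('r \<Rightarrow> 'b) \<Rightarrow> (int \<Rightarrow> 'b set) \<Rightarrow> bool" where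
  "rep_graded S T \<sigma> G \<longleftrightarrow>
     rep_surjective S T \<sigma> \<and> Z_graded G \<and>
     range \<sigma> \<subseteq> G 0 \<and> range T \<subseteq> G 1 \<and> range S \<subseteq> G (-1)"

text \<open>Faithfulness: \<open>\<pi>\<^sub>T\<^sub>,\<^sub>S(\<Delta>(1)) = \<sigma>(1)\<close>, where \<open>\<Delta>(1) = id\<close> and \<open>\<pi>\<^sub>T\<^sub>,\<^sub>S\<close> is the
  (unique) ring homomorphism \<open>F_P(Q) \<rightarrow> B\<close> (ring structure: pointwise addition,
  composition) with \<open>\<pi>(\<theta>\<^sub>q\<^sub>,\<^sub>p) = T(q)S(p)\<close>.\<close>
definition rep_faithful ::
  "('r::ring_1 \<Rightarrow> 'q::ab_group_add \<Rightarrow> 'q) \<Rightarrow> ('q \<Rightarrow> 'r \<Rightarrow> 'q) \<Rightarrow> ('p \<Rightarrow> 'q \<Rightarrow> 'r) \<Rightarrow>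
   ('p \<Rightarrow> 'b::ring) \<Rightarrow> ('q \<Rightarrow> 'b) \<Rightarrow> ('r \<Rightarrow> 'b) \<Rightarrow> bool" where
  "rep_faithful lQ rQ \<psi> S T \<sigma> \<longleftrightarrow>
     (\<exists>\<pi> :: ('q \<Rightarrow> 'q) \<Rightarrow> 'b.
        (\<forall>f\<in>F_PQ rQ \<psi>. \<forall>g\<in>F_PQ rQ \<psi>. \<pi> (f + g) = \<pi> f + \<pi> g) \<and>
        (\<forall>f\<in>F_PQ rQ \<psi>. \<forall>g\<in>F_PQ rQ \<psi>. \<pi> (f \<circ> g) = \<pi> f * \<pi> g) \<and>
        (\<forall>q p. \<pi> (thetaQ rQ \<psi> q p) = T q * S p) \<and>
        \<pi> (lQ 1) = \<sigma> 1)"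

end

theory Submission
  imports Defs
begin

text \<open>Put \<open>e = \<sigma>(1)\<close>. As \<open>B\<close> is generated by \<open>\<sigma>(R)\<close>, \<open>S(P)\<close>, \<open>T(Q)\<close> and the actions of \<open>R\<close>
  are unital, \<open>e\<close> is a left identity of \<open>B\<close>. Surjectivity of \<open>\<psi>\<close> writes \<open>1\<close> as a sum of values
  \<open>\<psi>(p,q)\<close>, whence \<open>e \<in> B\<^sub>-\<^sub>1 B\<^sub>1\<close>; by (FS') the identity of \<open>Q\<close> lies in \<open>F\<^sub>P(Q)\<close>, and
  faithfulness gives \<open>e = \<pi>\<^sub>T\<^sub>,\<^sub>S(id\<^sub>Q)\<close>, a sum of products \<open>T(q)S(p)\<close>, whence \<open>e \<in> B\<^sub>1 B\<^sub>-\<^sub>1\<close>.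
  For \<open>d = \<plusminus>1\<close> and \<open>z \<in> B\<^sub>d\<^sub>+\<^sub>m\<^sub>+\<^sub>n\<close> then \<open>z = e z \<in> B\<^sub>d B\<^sub>-\<^sub>d z \<subseteq> B\<^sub>d B\<^sub>m\<^sub>+\<^sub>n\<close>, so the inclusion
  \<open>B\<^sub>m\<^sub>+\<^sub>n \<subseteq> B\<^sub>m B\<^sub>n\<close> propagates from \<open>m\<close> to \<open>m \<plusminus> 1\<close>.\<close>

lemma additive_subgroup_addgen: "additive_subgroup (addgen X)"
  by (auto simp: additive_subgroup_def intro: addgen.intros)

lemma addgen_subset:
  assumes "X \<subseteq> H" "additive_subgroup H"
  shows "addgen X \<subseteq> H"
proof
  fix x assume "x \<in> addgen X"
  then show "x \<in> H"
    by induction (use assms in \<open>auto simp: additive_subgroup_def\<close>)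
qed

lemma addgen_mono: "X \<subseteq> Y \<Longrightarrow> addgen X \<subseteq> addgen Y"
  by (rule addgen_subset) (auto intro: addgen_base additive_subgroup_addgen)

lemma addgen_image_additive:
  fixes h :: "'a::ab_group_add \<Rightarrow> 'b::ab_group_add"
  assumes add: "\<And>x y. x \<in> addgen X \<Longrightarrow> y \<in> addgen X \<Longrightarrow> h (x + y) = h x + h y"
    and x: "x \<in> addgen X"
  shows "h x \<in> addgen (h ` X)"
proof -
  have h0: "h 0 = 0"
    using add[OF addgen_zero addgen_zero] by simp
  from x show ?thesis
  proof induction
    case addgen_zero
    show ?case by (simp add: h0 addgen.addgen_zero)
  next
    case (addgen_base x)
    then show ?case by (simp add: addgen.addgen_base)
  next
    case (addgen_add x y)
    then show ?case by (simp add: add addgen.addgen_add)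
  next
    case (addgen_neg x)
    have "h x + h (- x) = 0"
      using add[OF addgen_neg(1) addgen.addgen_neg[OF addgen_neg(1)]] h0 by simp
    then have "h (- x) = - h x"
      by (simp add: eq_neg_iff_add_eq_0 add.commute)
    then show ?case using addgen_neg(2) by (simp add: addgen.addgen_neg)
  qed
qed

lemma mult_mem_setprod: "x \<in> X \<Longrightarrow> y \<in> Y \<Longrightarrow> x * y \<in> setprod X Y"
  unfolding setprod_def by (blast intro: addgen_base)

lemma setprod_mono: "X \<subseteq> X' \<Longrightarrow> Y \<subseteq> Y' \<Longrightarrow> setprod X Y \<subseteq> setprod X' Y'"
  unfolding setprod_def by (rule addgen_mono) blast

lemma setprod_addgen_left: "setprod (addgen X) Y = setprod X Y"
proof
  have "a * y \<in> setprod X Y" if "a \<in> addgen X" "y \<in> Y" for a y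
    using that(1)
  proof induction
    case (addgen_add a b)
    then show ?case by (simp add: distrib_right setprod_def addgen.addgen_add)
  next
    case (addgen_neg a)
    then show ?case by (simp add: setprod_def addgen.addgen_neg)
  qed (auto simp: setprod_def intro: addgen.intros \<open>y \<in> Y\<close>)
  then show "setprod (addgen X) Y \<subseteq> setprod X Y"
    unfolding setprod_def[of "addgen X"]
    by (intro addgen_subset) (auto simp: setprod_def additive_subgroup_addgen)
  show "setprod X Y \<subseteq> setprod (addgen X) Y"
    by (rule setprod_mono) (auto intro: addgen_base)
qed

lemma setprod_addgen_right: "setprod X (addgen Y) = setprod X Y"
proof
  have "x * b \<in> setprod X Y" if "x \<in> X" "b \<in> addgen Y" for x b
    using that(2)
  proof induction
    case (addgen_add a b)
    then show ?case by (simp add: distrib_left setprod_def addgen.addgen_add)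
  next
    case (addgen_neg a)
    then show ?case by (simp add: setprod_def addgen.addgen_neg)
  qed (auto simp: setprod_def intro: addgen.intros \<open>x \<in> X\<close>)
  then show "setprod X (addgen Y) \<subseteq> setprod X Y"
    unfolding setprod_def[of X "addgen Y"]
    by (intro addgen_subset) (auto simp: setprod_def additive_subgroup_addgen)
  show "setprod X Y \<subseteq> setprod X (addgen Y)"
    by (rule setprod_mono) (auto intro: addgen_base)
qed

lemma setprod_assoc: "setprod (setprod X Y) Z = setprod X (setprod Y Z)"
proof -
  have "setprod (setprod X Y) Z = addgen {x * y * z |x y z. x \<in> X \<and> y \<in> Y \<and> z \<in> Z}"
    unfolding setprod_def[of X] setprod_addgen_left unfolding setprod_def
    by (rule arg_cong[of _ _ addgen]) blast
  also have "\<dots> = setprod X (setprod Y Z)"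
    unfolding setprod_def[of Y] setprod_addgen_right unfolding setprod_def
    by (rule arg_cong[of _ _ addgen]) (auto simp: mult.assoc)
  finally show ?thesis .
qed

lemma setprod_subset:
  assumes "additive_subgroup H" "\<And>x y. x \<in> X \<Longrightarrow> y \<in> Y \<Longrightarrow> x * y \<in> H"
  shows "setprod X Y \<subseteq> H"
  unfolding setprod_def using assms by (intro addgen_subset) auto

context
  fixes G :: "int \<Rightarrow> 'b::ring set" and e :: 'b
  assumes subgroup: "\<And>i. additive_subgroup (G i)"
    and mult_graded: "\<And>m n x y. x \<in> G m \<Longrightarrow> y \<in> G n \<Longrightarrow> x * y \<in> G (m + n)"
    and left_unit: "\<And>z. e * z = z"
begin

lemma setprod_graded_subset: "setprod (G m) (G n) \<subseteq> G (m + n)"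
  by (rule setprod_subset) (use subgroup mult_graded in blast)+

lemma graded_decomposition_shift:
  assumes e: "e \<in> setprod (G d) (G (- d))"
    and decomp: "\<And>n. G (m + n) \<subseteq> setprod (G m) (G n)"
  shows "G (d + m + n) \<subseteq> setprod (G (d + m)) (G n)"
proof
  fix z assume z: "z \<in> G (d + m + n)"
  have "z = e * z" by (simp add: left_unit)
  also have "\<dots> \<in> setprod (setprod (G d) (G (- d))) {z}"
    using e by (simp add: mult_mem_setprod)
  also have "\<dots> = setprod (G d) (setprod (G (- d)) {z})"
    by (rule setprod_assoc)
  also have "\<dots> \<subseteq> setprod (G d) (G (m + n))"
  proof (rule setprod_mono)
    have "setprod (G (- d)) {z} \<subseteq> setprod (G (- d)) (G (d + m + n))"
      using z by (intro setprod_mono) auto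
    also have "\<dots> \<subseteq> G (m + n)"
      using setprod_graded_subset[of "- d" "d + m + n"] by simp
    finally show "setprod (G (- d)) {z} \<subseteq> G (m + n)" .
  qed simp
  also have "\<dots> \<subseteq> setprod (G d) (setprod (G m) (G n))"
    by (intro setprod_mono decomp order.refl)
  also have "\<dots> = setprod (setprod (G d) (G m)) (G n)"
    by (rule setprod_assoc[symmetric])
  also have "\<dots> \<subseteq> setprod (G (d + m)) (G n)"
    by (intro setprod_mono setprod_graded_subset order.refl)
  finally show "z \<in> setprod (G (d + m)) (G n)" .
qed

lemma strongly_graded_if_unit_in_setprods:
  assumes e_pos: "e \<in> setprod (G 1) (G (- 1))" and e_neg: "e \<in> setprod (G (- 1)) (G 1)"
  shows "strongly_graded G"
proof -
  have "G (m + n) \<subseteq> setprod (G m) (G n)" for m n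
  proof (induction m arbitrary: n rule: int_induct[where k = 0])
    case base
    have "e \<in> G 0"
      using e_pos setprod_graded_subset[of 1 "- 1"] by auto
    then show ?case
      using mult_mem_setprod[of e "G 0"] by (metis add_0 left_unit subsetI)
  next
    case (step1 i)
    show ?case
      using graded_decomposition_shift[OF e_pos step1(2)] by (simp add: add.commute)
  next
    case (step2 i)
    have "e \<in> setprod (G (- 1)) (G (- (- 1)))"
      using e_neg by simp
    from graded_decomposition_shift[OF this step2(2)] show ?case
      by (simp add: add.commute)
  qed
  with setprod_graded_subset show ?thesis
    unfolding strongly_graded_def by blast
qed

end

lemma covariant_rep_unit_left_identity:
  assumes "unital_bimodule lP rP" "unital_bimodule lQ rQ"
    and cov: "covariant_rep lP rP lQ rQ \<psi> S T \<sigma>" and "rep_surjective S T \<sigma>"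
  shows "\<sigma> 1 * z = z"
proof -
  have \<sigma>_mult: "\<sigma> (a * b) = \<sigma> a * \<sigma> b"
    and S_left: "S (lP a p) = \<sigma> a * S p" and T_left: "T (lQ a q) = \<sigma> a * T q" for a b p q
    using cov by (simp_all add: covariant_rep_def)
  have "\<sigma> 1 * \<sigma> a = \<sigma> a" for a
    by (metis \<sigma>_mult mult_1_left)
  moreover have "\<sigma> 1 * S p = S p" "\<sigma> 1 * T q = T q" for p q
    using assms(1,2) by (simp_all add: unital_bimodule_def flip: S_left T_left)
  ultimately have generators: "\<sigma> 1 * x = x" if "x \<in> range \<sigma> \<union> range S \<union> range T" for x
    using that by blast
  have "z \<in> ringgen (range \<sigma> \<union> range S \<union> range T)"
    using \<open>rep_surjective S T \<sigma>\<close> by (simp add: rep_surjective_def)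
  then show ?thesis
    by induction (simp_all add: generators distrib_left flip: mult.assoc)
qed

lemma covariant_rep_unit_in_setprod_if_psi_surjective:
  assumes cov: "covariant_rep lP rP lQ rQ \<psi> S T \<sigma>" and "psi_surjective \<psi>"
    and "range S \<subseteq> X" "range T \<subseteq> Y"
  shows "\<sigma> 1 \<in> setprod X Y"
proof -
  have \<sigma>_add: "\<sigma> (a + b) = \<sigma> a + \<sigma> b" and \<sigma>_\<psi>: "\<sigma> (\<psi> p q) = S p * T q" for a b p q
    using cov by (simp_all add: covariant_rep_def)
  have "1 \<in> addgen {\<psi> p q |p q. True}"
    using \<open>psi_surjective \<psi>\<close> by (simp add: psi_surjective_def)
  then have "\<sigma> 1 \<in> addgen (\<sigma> ` {\<psi> p q |p q. True})"
    by (rule addgen_image_additive[rotated]) (rule \<sigma>_add)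
  also have "\<dots> \<subseteq> setprod X Y"
    unfolding setprod_def using assms(3,4) by (intro addgen_mono) (force simp: \<sigma>_\<psi>)
  finally show ?thesis .
qed

lemma covariant_rep_unit_in_setprod_if_faithful:
  fixes lQ :: "'r::ring_1 \<Rightarrow> 'q::ab_group_add \<Rightarrow> 'q" and S :: "'p::ab_group_add \<Rightarrow> 'b::ring"
  assumes "unital_bimodule lQ rQ" "condition_FS' lP rQ \<psi>"
    and "rep_faithful lQ rQ \<psi> S T \<sigma>"
    and "range S \<subseteq> X" "range T \<subseteq> Y"
  shows "\<sigma> 1 \<in> setprod Y X"
proof -
  obtain \<pi> :: "('q \<Rightarrow> 'q) \<Rightarrow> 'b" where
    \<pi>_add: "\<And>f g. f \<in> F_PQ rQ \<psi> \<Longrightarrow> g \<in> F_PQ rQ \<psi> \<Longrightarrow> \<pi> (f + g) = \<pi> f + \<pi> g" and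
    \<pi>_theta: "\<And>q p. \<pi> (thetaQ rQ \<psi> q p) = T q * S p" and \<pi>_unit: "\<pi> (lQ 1) = \<sigma> 1"
    using \<open>rep_faithful lQ rQ \<psi> S T \<sigma>\<close> unfolding rep_faithful_def by auto
  obtain \<Theta> where \<Theta>: "\<Theta> \<in> F_PQ rQ \<psi>" "\<And>q. \<Theta> q = q"
    using \<open>condition_FS' lP rQ \<psi>\<close> unfolding condition_FS'_def by auto
  have "lQ 1 = \<Theta>"
    using \<open>unital_bimodule lQ rQ\<close> \<Theta>(2) by (auto simp: unital_bimodule_def)
  with \<Theta>(1) have "lQ 1 \<in> addgen {thetaQ rQ \<psi> q p |q p. True}"
    by (simp add: F_PQ_def)
  then have "\<pi> (lQ 1) \<in> addgen (\<pi> ` {thetaQ rQ \<psi> q p |q p. True})"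
    by (rule addgen_image_additive[where h = \<pi>, rotated]) (simp add: \<pi>_add F_PQ_def)
  also have "\<dots> \<subseteq> setprod Y X"
    using assms(4,5) unfolding setprod_def by (intro addgen_mono) (force simp: \<pi>_theta)
  finally show ?thesis
    using \<pi>_unit by simp
qed

theorem mainTheorem4:
  fixes lP :: "'r::ring_1 \<Rightarrow> 'p::ab_group_add \<Rightarrow> 'p" and rP :: "'p \<Rightarrow> 'r \<Rightarrow> 'p"
    and lQ :: "'r \<Rightarrow> 'q::ab_group_add \<Rightarrow> 'q" and rQ :: "'q \<Rightarrow> 'r \<Rightarrow> 'q"
    and \<psi> :: "'p \<Rightarrow> 'q \<Rightarrow> 'r"
    and S :: "'p \<Rightarrow> 'b::ring" and T :: "'q \<Rightarrow> 'b" and \<sigma> :: "'r \<Rightarrow> 'b"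
    and G :: "int \<Rightarrow> 'b set"
  assumes "unital_R_system lP rP lQ rQ \<psi>"
    and "condition_FS' lP rQ \<psi>"
    and "covariant_rep lP rP lQ rQ \<psi> S T \<sigma>"
    and "rep_injective \<sigma>"
    and "rep_surjective S T \<sigma>"
    and "rep_graded S T \<sigma> G"
    and "rep_faithful lQ rQ \<psi> S T \<sigma>"
    and "psi_surjective \<psi>"
  shows "strongly_graded G"
proof -
  have unital: "unital_bimodule lP rP" "unital_bimodule lQ rQ"
    using assms(1) by (simp_all add: unital_R_system_def)
  have graded: "Z_graded G" and S_deg: "range S \<subseteq> G (- 1)" and T_deg: "range T \<subseteq> G 1"
    using assms(6) by (simp_all add: rep_graded_def)
  show ?thesis
  proof (rule strongly_graded_if_unit_in_setprods)
    show "additive_subgroup (G i)" for i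
      using graded by (simp add: Z_graded_def)
    show "x * y \<in> G (m + n)" if "x \<in> G m" "y \<in> G n" for m n x y
      using graded that by (simp add: Z_graded_def)
    show "\<sigma> 1 * z = z" for z
      using unital assms(3,5) by (rule covariant_rep_unit_left_identity)
    show "\<sigma> 1 \<in> setprod (G 1) (G (- 1))"
      using unital(2) assms(2,7) S_deg T_deg by (rule covariant_rep_unit_in_setprod_if_faithful)
    show "\<sigma> 1 \<in> setprod (G (- 1)) (G 1)"
      using assms(3,8) S_deg T_deg by (rule covariant_rep_unit_in_setprod_if_psi_surjective)
  qed
qed

end
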